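(* Let $\mathcal{F}(X)\subseteq\Psi$, with $\Psi$ carrying an admissible hyperspace topology $\Delta$. (i) If $(X,\mathbb{F})$ is weakly mixing of all orders, then $(\Psi,\overline{\mathbb{F}})$ is weakly mixing. (ii) If moreover $\mathbb{F}$ is commutative and there is a base $\beta$ for the topology of $X$ with $U^+=\{A\in\Psi:A\subseteq U\}\in\Delta$ for every $U\in\beta$, then $(\Psi,\overline{\mathbb{F}})$ weakly mixing implies $(X,\mathbb{F})$ weakly mixing of all orders.
   Context: $(X,d)$ compact metric, $\mathbb{F}=(f_n)$ continuous self-maps, $\omega_n=f_n\circ\cdots\circ f_1$; $\mathbb{F}$ is commutative if $f_n\circ f_m=f_m\circ f_n$ for all $n,m$. The system is weakly mixing of order $k$ if for any non-empty open $U_1,\dots,U_k,V_1,\dots,V_k$ there is $n$ with $\omega_n(U_i)\cap V_i\neq\emptyset$ for all $i$; weakly mixing means of order 2. $\mathcal{F}(X)$ denotes non-empty finite subsets; $\Psi\subseteq\mathcal{K}(X)$ is invariant under all $\omega_k$, and the induced system acts by $\overline{\omega}_k(A)=\omega_k(A)$, with mixing notions defined analogously on $(\Psi,\Delta)$. An admissible topology ($x\mapsto\{x\}$ continuous) is of hit-and-miss or hit-and-far-miss type: generated by $U^-=\{A:A\cap U\neq\emptyset\}$ ($U$ open) and sets $(E^c)^+=\{A:A\subseteq E^c\}$ (resp. $(E^c)^{++}=\{A:\exists\varepsilon>0, S_\varepsilon(A)\subseteq E^c\}$) for $E$ in a fixed family of closed sets; induced maps are assumed continuous. *)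

theory Defs
  imports "HOL-Analysis.Analysis"
begin

text \<open>Non-autonomous system: f 1, f 2, ... (f 0 is unused);
  omega f n = f n o ... o f 1, omega f 0 = id.\<close>
fun omega :: "(nat \<Rightarrow> 'a \<Rightarrow> 'a) \<Rightarrow> nat \<Rightarrow> 'a \<Rightarrow> 'a" where
  "omega f 0 = id"
| "omega f (Suc n) = f (Suc n) \<circ> omega f n"

definition omega_bar :: "(nat \<Rightarrow> 'a \<Rightarrow> 'a) \<Rightarrow> nat \<Rightarrow> 'a set \<Rightarrow> 'a set" where
  "omega_bar f n A = omega f n ` A"

definition weakly_mixing_order :: "'b topology \<Rightarrow> (nat \<Rightarrow> 'b \<Rightarrow> 'b) \<Rightarrow> nat \<Rightarrow> bool" where
  "weakly_mixing_order T g k \<longleftrightarrow>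
     (\<forall>U V. (\<forall>i<k. openin T (U i) \<and> U i \<noteq> {} \<and> openin T (V i) \<and> V i \<noteq> {}) \<longrightarrow>
        (\<exists>n\<ge>1. \<forall>i<k. g n ` (U i) \<inter> V i \<noteq> {}))"

definition weakly_mixing :: "'b topology \<Rightarrow> (nat \<Rightarrow> 'b \<Rightarrow> 'b) \<Rightarrow> bool" where
  "weakly_mixing T g \<longleftrightarrow> weakly_mixing_order T g 2"

definition weakly_mixing_all_orders :: "'b topology \<Rightarrow> (nat \<Rightarrow> 'b \<Rightarrow> 'b) \<Rightarrow> bool" where
  "weakly_mixing_all_orders T g \<longleftrightarrow> (\<forall>k\<ge>1. weakly_mixing_order T g k)"

definition commutative_system :: "(nat \<Rightarrow> 'a \<Rightarrow> 'a) \<Rightarrow> bool" where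
  "commutative_system f \<longleftrightarrow> (\<forall>n\<ge>1. \<forall>m\<ge>1. f n \<circ> f m = f m \<circ> f n)"

definition nonempty_compacts :: "'a::topological_space set set" where
  "nonempty_compacts = {A. A \<noteq> {} \<and> compact A}"

definition nonempty_finites :: "'a set set" where
  "nonempty_finites = {A. A \<noteq> {} \<and> finite A}"

definition hit :: "'a set set \<Rightarrow> 'a set \<Rightarrow> 'a set set" where
  "hit \<Psi> U = {A \<in> \<Psi>. A \<inter> U \<noteq> {}}"

definition miss :: "'a set set \<Rightarrow> 'a set \<Rightarrow> 'a set set" where
  "miss \<Psi> U = {A \<in> \<Psi>. A \<subseteq> U}"

definition far_miss :: "'a::metric_space set set \<Rightarrow> 'a set \<Rightarrow> 'a set set" where
  "far_miss \<Psi> U = {A \<in> \<Psi>. \<exists>\<epsilon>>0. {x. \<exists>a\<in>A. dist x a < \<epsilon>} \<subseteq> U}"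

definition hit_and_miss_type :: "'a::metric_space set set \<Rightarrow> 'a set topology \<Rightarrow> bool" where
  "hit_and_miss_type \<Psi> \<Delta> \<longleftrightarrow> (\<exists>\<E>. (\<forall>E\<in>\<E>. closed E) \<and>
     \<Delta> = topology_generated_by ({hit \<Psi> U | U. open U} \<union> {miss \<Psi> (- E) | E. E \<in> \<E>}))"

definition hit_and_far_miss_type :: "'a::metric_space set set \<Rightarrow> 'a set topology \<Rightarrow> bool" where
  "hit_and_far_miss_type \<Psi> \<Delta> \<longleftrightarrow> (\<exists>\<E>. (\<forall>E\<in>\<E>. closed E) \<and>
     \<Delta> = topology_generated_by ({hit \<Psi> U | U. open U} \<union> {far_miss \<Psi> (- E) | E. E \<in> \<E>}))"

definition admissible :: "'a::metric_space set topology \<Rightarrow> bool" where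
  "admissible \<Delta> \<longleftrightarrow> continuous_map euclidean \<Delta> (\<lambda>x. {x})"

end

theory Submission
  imports Defs
begin

text \<open>(i) Every open set of the hyperspace is stable under small Hausdorff perturbations by
  finite sets: this holds for the generating hit, miss and far-miss sets and survives finite
  intersections and unions. Given nonempty open \<U>, \<V>, pick A \<in> \<U>, B \<in> \<V> and finite
  nets C of A and D of B. Weak mixing of all orders yields one time n at which omega n carries every
  small ball around a point of C into every small ball around a point of D; one witness per
  pair gives a finite F close to A with omega n F close to B, so F \<in> \<U> and omega n F \<in> \<V>.

  (ii) Testing weak mixing of the hyperspace on the open sets "hit U" and "miss W", W basic,
  gives weak mixing on X. For a commutative system, Furstenberg's intersection lemma provides,
  for finitely many pairs of nonempty open sets, a single such pair all of whose hitting times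
  are common hitting times of the given pairs; hence weak mixing of all orders.\<close>

definition hausdorff_close :: "real \<Rightarrow> 'a::metric_space set \<Rightarrow> 'a set \<Rightarrow> bool" where
  "hausdorff_close e A B \<longleftrightarrow> (\<forall>a\<in>A. \<exists>b\<in>B. dist a b < e) \<and> (\<forall>b\<in>B. \<exists>a\<in>A. dist a b < e)"

lemma hausdorff_close_mono: "hausdorff_close e A B \<Longrightarrow> e \<le> e' \<Longrightarrow> hausdorff_close e' A B"
  unfolding hausdorff_close_def by (meson less_le_trans)

lemma hausdorff_close_trans:
  assumes "hausdorff_close e A B" "hausdorff_close e' B C"
  shows "hausdorff_close (e + e') A C"
  using assms dist_triangle unfolding hausdorff_close_def
  by (meson add_strict_mono le_less_trans)

lemma compact_finite_hausdorff_close_subset: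
  fixes A :: "'a::metric_space set"
  assumes "compact A" "e > 0"
  obtains C where "finite C" "C \<subseteq> A" "hausdorff_close e A C"
proof -
  obtain C where C: "finite C" "C \<subseteq> A" "A \<subseteq> (\<Union>c\<in>C. ball c e)"
    using seq_compact_imp_totally_bounded[OF compact_imp_seq_compact[OF \<open>compact A\<close>], rule_format, OF \<open>e > 0\<close>]
    by blast
  have "hausdorff_close e A C"
    unfolding hausdorff_close_def
  proof (intro conjI ballI)
    show "\<exists>c\<in>C. dist a c < e" if "a \<in> A" for a
      using that C(3) by (force simp: dist_commute)
    show "\<exists>a\<in>A. dist a c < e" if "c \<in> C" for c
      using that C(2) \<open>e > 0\<close> by force
  qed
  with C show thesis by (intro that)
qed

lemma finite_hausdorff_close_witness:
  fixes g :: "'a::metric_space \<Rightarrow> 'b::metric_space"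
  assumes "finite C" "C \<noteq> {}" "finite D" "D \<noteq> {}"
    and mix: "\<And>c d. c \<in> C \<Longrightarrow> d \<in> D \<Longrightarrow> g ` ball c e \<inter> ball d e \<noteq> {}"
  obtains F where "F \<in> nonempty_finites" "hausdorff_close e C F" "hausdorff_close e D (g ` F)"
proof -
  have "\<forall>p\<in>C \<times> D. \<exists>x. dist (fst p) x < e \<and> dist (snd p) (g x) < e"
    using mix by fastforce
  then obtain x where x: "\<forall>p\<in>C \<times> D. dist (fst p) (x p) < e \<and> dist (snd p) (g (x p)) < e"
    by (meson bchoice)
  define F where "F = x ` (C \<times> D)"
  obtain c0 d0 where "c0 \<in> C" "d0 \<in> D" using assms(2,4) by blast
  have "F \<in> nonempty_finites"
    using assms(1-4) unfolding F_def nonempty_finites_def by auto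
  moreover have "hausdorff_close e C F"
    unfolding hausdorff_close_def F_def
  proof (intro conjI ballI)
    show "\<exists>y\<in>x ` (C \<times> D). dist c y < e" if "c \<in> C" for c
      using that \<open>d0 \<in> D\<close> x by force
    show "\<exists>c\<in>C. dist c y < e" if "y \<in> x ` (C \<times> D)" for y
      using that x by force
  qed
  moreover have "hausdorff_close e D (g ` F)"
    unfolding hausdorff_close_def F_def
  proof (intro conjI ballI)
    show "\<exists>y\<in>g ` x ` (C \<times> D). dist d y < e" if "d \<in> D" for d
      using that \<open>c0 \<in> C\<close> x by force
    show "\<exists>d\<in>D. dist d y < e" if "y \<in> g ` x ` (C \<times> D)" for y
      using that x by force
  qed
  ultimately show thesis by (rule that)
qed

definition finite_approx_open :: "'a::metric_space set set \<Rightarrow> bool" where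
  "finite_approx_open \<O> \<longleftrightarrow>
     (\<forall>A\<in>\<O>. \<exists>e>0. \<forall>F\<in>nonempty_finites. hausdorff_close e A F \<longrightarrow> F \<in> \<O>)"

lemma finite_approx_open_generate_topology_on:
  assumes "\<And>S. S \<in> \<S> \<Longrightarrow> finite_approx_open S" "generate_topology_on \<S> \<O>"
  shows "finite_approx_open \<O>"
  using assms(2)
proof induction
  case (Int S T)
  show ?case
    unfolding finite_approx_open_def
  proof
    fix A assume "A \<in> S \<inter> T"
    then obtain e e' where "e > 0" "\<forall>F\<in>nonempty_finites. hausdorff_close e A F \<longrightarrow> F \<in> S"
      and "e' > 0" "\<forall>F\<in>nonempty_finites. hausdorff_close e' A F \<longrightarrow> F \<in> T"
      using Int.IH unfolding finite_approx_open_def by blast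
    then show "\<exists>e>0. \<forall>F\<in>nonempty_finites. hausdorff_close e A F \<longrightarrow> F \<in> S \<inter> T"
      using hausdorff_close_mono[of "min e e'" A _ e] hausdorff_close_mono[of "min e e'" A _ e']
      by (intro exI[of _ "min e e'"]) auto
  qed
next
  case (UN K)
  then show ?case
    unfolding finite_approx_open_def by (meson UnionE UnionI)
qed (use assms(1) in \<open>auto simp: finite_approx_open_def\<close>)

lemma finite_approx_open_hit:
  assumes "nonempty_finites \<subseteq> \<Psi>" "open U"
  shows "finite_approx_open (hit \<Psi> U)"
  unfolding finite_approx_open_def
proof
  fix A assume "A \<in> hit \<Psi> U"
  then obtain a where "a \<in> A" "a \<in> U" unfolding hit_def by blast
  then obtain e where "e > 0" "ball a e \<subseteq> U"
    using \<open>open U\<close> open_contains_ball by blast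
  moreover have "F \<in> hit \<Psi> U" if F: "F \<in> nonempty_finites" "hausdorff_close e A F" for F
  proof -
    obtain x where "x \<in> F" "dist a x < e"
      using F(2) \<open>a \<in> A\<close> unfolding hausdorff_close_def by blast
    then show ?thesis
      using F(1) assms(1) \<open>ball a e \<subseteq> U\<close> unfolding hit_def by auto
  qed
  ultimately show "\<exists>e>0. \<forall>F\<in>nonempty_finites. hausdorff_close e A F \<longrightarrow> F \<in> hit \<Psi> U"
    by blast
qed

lemma finite_approx_open_miss:
  assumes "nonempty_finites \<subseteq> \<Psi>" "\<Psi> \<subseteq> nonempty_compacts" "closed E"
  shows "finite_approx_open (miss \<Psi> (- E))"
  unfolding finite_approx_open_def
proof
  fix A assume "A \<in> miss \<Psi> (- E)"
  then have "compact A" "A \<subseteq> - E"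
    using assms(2) unfolding miss_def nonempty_compacts_def by auto
  then obtain e where "e > 0" and e: "\<And>a. a \<in> A \<Longrightarrow> ball a e \<subseteq> - E"
    using Heine_Borel_lemma[of A "{- E}"] \<open>closed E\<close> by auto
  moreover have "F \<in> miss \<Psi> (- E)" if F: "F \<in> nonempty_finites" "hausdorff_close e A F" for F
  proof -
    have "F \<subseteq> - E"
      using F(2) e unfolding hausdorff_close_def by fastforce
    then show ?thesis
      using F(1) assms(1) unfolding miss_def by auto
  qed
  ultimately show "\<exists>e>0. \<forall>F\<in>nonempty_finites. hausdorff_close e A F \<longrightarrow> F \<in> miss \<Psi> (- E)"
    by blast
qed

lemma finite_approx_open_far_miss:
  assumes "nonempty_finites \<subseteq> \<Psi>"
  shows "finite_approx_open (far_miss \<Psi> U)"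
  unfolding finite_approx_open_def
proof
  fix A assume "A \<in> far_miss \<Psi> U"
  then obtain e where "e > 0" and e: "{x. \<exists>a\<in>A. dist x a < e} \<subseteq> U"
    unfolding far_miss_def by blast
  have "F \<in> far_miss \<Psi> U" if F: "F \<in> nonempty_finites" "hausdorff_close (e/2) A F" for F
  proof -
    have "{y. \<exists>x\<in>F. dist y x < e/2} \<subseteq> U"
    proof
      fix y assume "y \<in> {y. \<exists>x\<in>F. dist y x < e/2}"
      then obtain x a where "dist y x < e/2" "a \<in> A" "dist a x < e/2"
        using F(2) unfolding hausdorff_close_def by blast
      then have "dist y a < e"
        using dist_triangle2[of y a x] by linarith
      with \<open>a \<in> A\<close> e show "y \<in> U" by blast
    qed
    then show ?thesis
      using F(1) assms half_gt_zero[OF \<open>e > 0\<close>] unfolding far_miss_def by blast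
  qed
  with \<open>e > 0\<close> show "\<exists>e>0. \<forall>F\<in>nonempty_finites. hausdorff_close e A F \<longrightarrow> F \<in> far_miss \<Psi> U"
    by (intro exI[of _ "e/2"]) auto
qed

lemma hyperspace_topology_subbasis:
  assumes "nonempty_finites \<subseteq> \<Psi>" "\<Psi> \<subseteq> nonempty_compacts"
    and "hit_and_miss_type \<Psi> \<Delta> \<or> hit_and_far_miss_type \<Psi> \<Delta>"
  obtains \<S> where "\<Delta> = topology_generated_by ({hit \<Psi> U | U. open U} \<union> \<S>)"
    "\<And>S. S \<in> \<S> \<Longrightarrow> finite_approx_open S"
  using assms(3)
proof
  assume "hit_and_miss_type \<Psi> \<Delta>"
  then obtain \<E> where "\<forall>E\<in>\<E>. closed E"
    "\<Delta> = topology_generated_by ({hit \<Psi> U | U. open U} \<union> {miss \<Psi> (- E) | E. E \<in> \<E>})"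
    unfolding hit_and_miss_type_def by blast
  with finite_approx_open_miss[OF assms(1,2)] show thesis
    by (intro that) auto
next
  assume "hit_and_far_miss_type \<Psi> \<Delta>"
  then obtain \<E> where
    "\<Delta> = topology_generated_by ({hit \<Psi> U | U. open U} \<union> {far_miss \<Psi> (- E) | E. E \<in> \<E>})"
    unfolding hit_and_far_miss_type_def by blast
  with finite_approx_open_far_miss[OF assms(1)] show thesis
    by (intro that) auto
qed

lemma finite_approx_open_openin:
  assumes "nonempty_finites \<subseteq> \<Psi>" "\<Psi> \<subseteq> nonempty_compacts"
    and "hit_and_miss_type \<Psi> \<Delta> \<or> hit_and_far_miss_type \<Psi> \<Delta>" "openin \<Delta> \<O>"
  shows "finite_approx_open \<O>"
proof -
  obtain \<S> where \<Delta>: "\<Delta> = topology_generated_by ({hit \<Psi> U | U. open U} \<union> \<S>)"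
    and \<S>: "\<And>S. S \<in> \<S> \<Longrightarrow> finite_approx_open S"
    using hyperspace_topology_subbasis[OF assms(1-3)] by blast
  show ?thesis
    using assms(4) unfolding \<Delta> openin_topology_generated_by_iff
    by (rule finite_approx_open_generate_topology_on[rotated])
      (use finite_approx_open_hit[OF assms(1)] \<S> in auto)
qed

lemma openin_hit:
  assumes "nonempty_finites \<subseteq> \<Psi>" "\<Psi> \<subseteq> nonempty_compacts"
    and "hit_and_miss_type \<Psi> \<Delta> \<or> hit_and_far_miss_type \<Psi> \<Delta>" "open U"
  shows "openin \<Delta> (hit \<Psi> U)"
proof -
  obtain \<S> where "\<Delta> = topology_generated_by ({hit \<Psi> U | U. open U} \<union> \<S>)"
    using hyperspace_topology_subbasis[OF assms(1-3)] by blast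
  with \<open>open U\<close> show ?thesis
    by (auto intro: topology_generated_by_Basis)
qed

text \<open>P consists of the pairs of r-balls around the points of finite r-nets of some A \<in> \<U> and
  B \<in> \<V>, where 2r is a radius witnessing finite_approx_open for both A and B.\<close>
lemma hyperspace_open_pair_finite_reduction:
  assumes fin: "nonempty_finites \<subseteq> \<Psi>" and comp: "\<Psi> \<subseteq> nonempty_compacts"
    and type: "hit_and_miss_type \<Psi> \<Delta> \<or> hit_and_far_miss_type \<Psi> \<Delta>" and "topspace \<Delta> = \<Psi>"
    and \<U>: "openin \<Delta> \<U>" "\<U> \<noteq> {}" and \<V>: "openin \<Delta> \<V>" "\<V> \<noteq> {}"
  obtains P where "finite P" "\<And>U V. (U, V) \<in> P \<Longrightarrow> open U \<and> U \<noteq> {} \<and> open V \<and> V \<noteq> {}"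
    "\<And>g. (\<And>U V. (U, V) \<in> P \<Longrightarrow> g ` U \<inter> V \<noteq> {}) \<Longrightarrow> \<exists>F\<in>\<U>. g ` F \<in> \<V>"
proof -
  obtain A B where "A \<in> \<U>" "B \<in> \<V>" using \<U> \<V> by blast
  obtain e where "e > 0" and e: "\<forall>F\<in>nonempty_finites. hausdorff_close e A F \<longrightarrow> F \<in> \<U>"
    using finite_approx_open_openin[OF fin comp type \<U>(1)] \<open>A \<in> \<U>\<close>
    unfolding finite_approx_open_def by blast
  obtain e' where "e' > 0" and e': "\<forall>F\<in>nonempty_finites. hausdorff_close e' B F \<longrightarrow> F \<in> \<V>"
    using finite_approx_open_openin[OF fin comp type \<V>(1)] \<open>B \<in> \<V>\<close>
    unfolding finite_approx_open_def by blast
  define r where "r = min e e' / 2"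
  have "r > 0" using \<open>e > 0\<close> \<open>e' > 0\<close> by (simp add: r_def)
  have "A \<in> \<Psi>" "B \<in> \<Psi>"
    using \<open>A \<in> \<U>\<close> \<open>B \<in> \<V>\<close> \<U> \<V> \<open>topspace \<Delta> = \<Psi>\<close> openin_subset by blast+
  then have "compact A" "A \<noteq> {}" "compact B" "B \<noteq> {}"
    using comp unfolding nonempty_compacts_def by auto
  obtain C where "finite C" "C \<subseteq> A" and AC: "hausdorff_close r A C"
    by (rule compact_finite_hausdorff_close_subset[OF \<open>compact A\<close> \<open>r > 0\<close>])
  obtain D where "finite D" "D \<subseteq> B" and BD: "hausdorff_close r B D"
    by (rule compact_finite_hausdorff_close_subset[OF \<open>compact B\<close> \<open>r > 0\<close>])
  have "C \<noteq> {}" "D \<noteq> {}"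
    using AC BD \<open>A \<noteq> {}\<close> \<open>B \<noteq> {}\<close> unfolding hausdorff_close_def by auto
  define P where "P = (\<lambda>(c, d). (ball c r, ball d r)) ` (C \<times> D)"
  show thesis
  proof
    show "finite P" using \<open>finite C\<close> \<open>finite D\<close> by (simp add: P_def)
    show "open U \<and> U \<noteq> {} \<and> open V \<and> V \<noteq> {}" if "(U, V) \<in> P" for U V
      using that \<open>r > 0\<close> by (auto simp: P_def)
    fix g assume hits: "\<And>U V. (U, V) \<in> P \<Longrightarrow> g ` U \<inter> V \<noteq> {}"
    have "g ` ball c r \<inter> ball d r \<noteq> {}" if "c \<in> C" "d \<in> D" for c d
    proof (rule hits)
      show "(ball c r, ball d r) \<in> P"
        using that unfolding P_def by force
    qed
    then obtain F where "F \<in> nonempty_finites" "hausdorff_close r C F" "hausdorff_close r D (g ` F)"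
      using finite_hausdorff_close_witness[OF \<open>finite C\<close> \<open>C \<noteq> {}\<close> \<open>finite D\<close> \<open>D \<noteq> {}\<close>]
      by blast
    then have "hausdorff_close (r + r) A F" "hausdorff_close (r + r) B (g ` F)"
      using hausdorff_close_trans AC BD by blast+
    moreover have "r + r \<le> e" "r + r \<le> e'"
      by (simp_all add: r_def)
    ultimately have "hausdorff_close e A F" "hausdorff_close e' B (g ` F)"
      using hausdorff_close_mono by blast+
    moreover have "g ` F \<in> nonempty_finites"
      using \<open>F \<in> nonempty_finites\<close> by (simp add: nonempty_finites_def)
    ultimately show "\<exists>F\<in>\<U>. g ` F \<in> \<V>"
      using \<open>F \<in> nonempty_finites\<close> e e' by blast
  qed
qed

lemma weakly_mixing_orderE:
  assumes "weakly_mixing_order T g k"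
    and "\<And>i. i < k \<Longrightarrow> openin T (U i) \<and> U i \<noteq> {} \<and> openin T (V i) \<and> V i \<noteq> {}"
  obtains n where "n \<ge> 1" "\<And>i. i < k \<Longrightarrow> g n ` U i \<inter> V i \<noteq> {}"
  using assms(1)[unfolded weakly_mixing_order_def, rule_format, of U V] assms(2) that by blast

lemma weakly_mixing_all_orders_finite_family:
  assumes wm: "weakly_mixing_all_orders T g" and "finite P"
    and P: "\<And>U V. (U, V) \<in> P \<Longrightarrow> openin T U \<and> U \<noteq> {} \<and> openin T V \<and> V \<noteq> {}"
  obtains n where "n \<ge> 1" "\<And>U V. (U, V) \<in> P \<Longrightarrow> g n ` U \<inter> V \<noteq> {}"
proof (cases "P = {}")
  case False
  obtain h where h: "bij_betw h {0..<card P} P"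
    using ex_bij_betw_nat_finite[OF \<open>finite P\<close>] by blast
  have wmo: "weakly_mixing_order T g (card P)"
    using wm \<open>finite P\<close> False unfolding weakly_mixing_all_orders_def
    by (simp add: Suc_leI card_gt_0_iff)
  have opn: "openin T (fst (h i)) \<and> fst (h i) \<noteq> {} \<and> openin T (snd (h i)) \<and> snd (h i) \<noteq> {}"
    if "i < card P" for i
  proof -
    have "h i \<in> P" using bij_betwE[OF h] that by simp
    then show ?thesis using P[of "fst (h i)" "snd (h i)"] by simp
  qed
  obtain n where "n \<ge> 1" and n: "\<And>i. i < card P \<Longrightarrow> g n ` fst (h i) \<inter> snd (h i) \<noteq> {}"
    using weakly_mixing_orderE[where U = "\<lambda>i. fst (h i)" and V = "\<lambda>i. snd (h i)", OF wmo opn]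
    by blast
  have "g n ` U \<inter> V \<noteq> {}" if "(U, V) \<in> P" for U V
  proof -
    have "(U, V) \<in> h ` {0..<card P}" using bij_betw_imp_surj_on[OF h] that by simp
    then obtain i where "i < card P" "h i = (U, V)" by auto
    then show ?thesis using n[of i] by simp
  qed
  with \<open>n \<ge> 1\<close> show thesis by (rule that)
qed (use that in auto)

theorem weakly_mixing_hyperspace:
  assumes fin: "nonempty_finites \<subseteq> \<Psi>" and comp: "\<Psi> \<subseteq> nonempty_compacts"
    and type: "hit_and_miss_type \<Psi> \<Delta> \<or> hit_and_far_miss_type \<Psi> \<Delta>" and top: "topspace \<Delta> = \<Psi>"
    and wm: "weakly_mixing_all_orders euclidean (omega f)"
  shows "weakly_mixing \<Delta> (omega_bar f)"
  unfolding weakly_mixing_def weakly_mixing_order_def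
proof (intro allI impI)
  fix \<U> \<V> :: "nat \<Rightarrow> 'a set set"
  assume "\<forall>i<2. openin \<Delta> (\<U> i) \<and> \<U> i \<noteq> {} \<and> openin \<Delta> (\<V> i) \<and> \<V> i \<noteq> {}"
  then have 0: "openin \<Delta> (\<U> 0)" "\<U> 0 \<noteq> {}" "openin \<Delta> (\<V> 0)" "\<V> 0 \<noteq> {}"
    and 1: "openin \<Delta> (\<U> 1)" "\<U> 1 \<noteq> {}" "openin \<Delta> (\<V> 1)" "\<V> 1 \<noteq> {}"
    by auto
  obtain P0 where "finite P0"
    and P0_open: "\<And>U V. (U, V) \<in> P0 \<Longrightarrow> open U \<and> U \<noteq> {} \<and> open V \<and> V \<noteq> {}"
    and P0: "\<And>g. (\<And>U V. (U, V) \<in> P0 \<Longrightarrow> g ` U \<inter> V \<noteq> {}) \<Longrightarrow> \<exists>F\<in>\<U> 0. g ` F \<in> \<V> 0"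
    by (rule hyperspace_open_pair_finite_reduction[OF fin comp type top 0]) blast
  obtain P1 where "finite P1"
    and P1_open: "\<And>U V. (U, V) \<in> P1 \<Longrightarrow> open U \<and> U \<noteq> {} \<and> open V \<and> V \<noteq> {}"
    and P1: "\<And>g. (\<And>U V. (U, V) \<in> P1 \<Longrightarrow> g ` U \<inter> V \<noteq> {}) \<Longrightarrow> \<exists>F\<in>\<U> 1. g ` F \<in> \<V> 1"
    by (rule hyperspace_open_pair_finite_reduction[OF fin comp type top 1]) blast
  obtain n where "n \<ge> 1" and n: "\<And>U V. (U, V) \<in> P0 \<union> P1 \<Longrightarrow> omega f n ` U \<inter> V \<noteq> {}"
  proof (rule weakly_mixing_all_orders_finite_family[OF wm])
    show "finite (P0 \<union> P1)" using \<open>finite P0\<close> \<open>finite P1\<close> by simp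
    show "openin euclidean U \<and> U \<noteq> {} \<and> openin euclidean V \<and> V \<noteq> {}"
      if "(U, V) \<in> P0 \<union> P1" for U V
      using that P0_open P1_open by auto
  qed (rule that)
  have "omega_bar f n ` \<U> i \<inter> \<V> i \<noteq> {}" if "i < 2" for i
  proof -
    have "\<exists>F\<in>\<U> i. omega f n ` F \<in> \<V> i"
    proof (cases "i = 0")
      case True
      then show ?thesis by (simp only:) (rule P0, rule n, simp)
    next
      case False
      with that have "i = 1" by simp
      then show ?thesis by (simp only:) (rule P1, rule n, simp)
    qed
    then obtain F where "F \<in> \<U> i" "omega_bar f n F \<in> \<V> i"
      unfolding omega_bar_def by blast
    then show ?thesis by blast
  qed
  with \<open>n \<ge> 1\<close> show "\<exists>n\<ge>1. \<forall>i<2. omega_bar f n ` \<U> i \<inter> \<V> i \<noteq> {}"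
    by blast
qed

theorem weakly_mixing_if_weakly_mixing_hyperspace:
  assumes fin: "nonempty_finites \<subseteq> \<Psi>" and comp: "\<Psi> \<subseteq> nonempty_compacts"
    and type: "hit_and_miss_type \<Psi> \<Delta> \<or> hit_and_far_miss_type \<Psi> \<Delta>"
    and basis: "topological_basis \<beta>" "\<And>W. W \<in> \<beta> \<Longrightarrow> openin \<Delta> (miss \<Psi> W)"
    and wm: "weakly_mixing \<Delta> (omega_bar f)"
  shows "weakly_mixing euclidean (omega f)"
  unfolding weakly_mixing_def weakly_mixing_order_def
proof (intro allI impI)
  fix U V :: "nat \<Rightarrow> 'a set"
  assume UV: "\<forall>i<2. openin euclidean (U i) \<and> U i \<noteq> {} \<and> openin euclidean (V i) \<and> V i \<noteq> {}"
  have "\<exists>W. W \<in> \<beta> \<and> W \<noteq> {} \<and> W \<subseteq> V i" if i2: "i < 2" for i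
  proof -
    obtain v where "v \<in> V i" "open (V i)" using UV i2 by auto
    then obtain W where "W \<in> \<beta>" "v \<in> W" "W \<subseteq> V i"
      using topological_basisE[OF basis(1)] by metis
    then show ?thesis by blast
  qed
  then obtain W where W: "\<And>i. i < 2 \<Longrightarrow> W i \<in> \<beta> \<and> W i \<noteq> {} \<and> W i \<subseteq> V i"
    by metis
  have singleton: "{x} \<in> \<Psi>" for x
    using fin unfolding nonempty_finites_def by auto
  have "openin \<Delta> (hit \<Psi> (U i)) \<and> hit \<Psi> (U i) \<noteq> {} \<and> openin \<Delta> (miss \<Psi> (W i)) \<and> miss \<Psi> (W i) \<noteq> {}"
    if i2: "i < 2" for i
  proof (intro conjI)
    show "openin \<Delta> (hit \<Psi> (U i))" using openin_hit[OF fin comp type] UV i2 by simp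
    show "openin \<Delta> (miss \<Psi> (W i))" using basis(2) W i2 by blast
    obtain u where "u \<in> U i" using UV i2 by auto
    then show "hit \<Psi> (U i) \<noteq> {}" unfolding hit_def using singleton[of u] by auto
    obtain w where "w \<in> W i" using W i2 by auto
    then show "miss \<Psi> (W i) \<noteq> {}" unfolding miss_def using singleton[of w] by auto
  qed
  then obtain n where "n \<ge> 1"
    and n: "\<And>i. i < 2 \<Longrightarrow> omega_bar f n ` hit \<Psi> (U i) \<inter> miss \<Psi> (W i) \<noteq> {}"
    using weakly_mixing_orderE[where U = "\<lambda>i. hit \<Psi> (U i)" and V = "\<lambda>i. miss \<Psi> (W i)",
        OF wm[unfolded weakly_mixing_def]] by blast
  have "omega f n ` U i \<inter> V i \<noteq> {}" if i2: "i < 2" for i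
  proof -
    obtain A where "A \<in> hit \<Psi> (U i)" "omega_bar f n A \<in> miss \<Psi> (W i)"
      using n[OF i2] by blast
    then obtain x where "x \<in> U i" "omega f n x \<in> W i"
      unfolding hit_def miss_def omega_bar_def by blast
    then show ?thesis using W[OF i2] by blast
  qed
  with \<open>n \<ge> 1\<close> show "\<exists>n\<ge>1. \<forall>i<2. omega f n ` U i \<inter> V i \<noteq> {}"
    by blast
qed

definition hitting_times :: "(nat \<Rightarrow> 'b \<Rightarrow> 'b) \<Rightarrow> 'b set \<Rightarrow> 'b set \<Rightarrow> nat set" where
  "hitting_times g U V = {n. g n ` U \<inter> V \<noteq> {}}"

lemma weakly_mixingE:
  assumes "weakly_mixing T g"
    and "openin T U1" "U1 \<noteq> {}" "openin T V1" "V1 \<noteq> {}"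
    and "openin T U2" "U2 \<noteq> {}" "openin T V2" "V2 \<noteq> {}"
  obtains n where "n \<ge> 1" "n \<in> hitting_times g U1 V1" "n \<in> hitting_times g U2 V2"
proof -
  let ?U = "\<lambda>i::nat. if i = 0 then U1 else U2" and ?V = "\<lambda>i::nat. if i = 0 then V1 else V2"
  have wm2: "weakly_mixing_order T g 2"
    using assms(1) unfolding weakly_mixing_def .
  have "openin T (?U i) \<and> ?U i \<noteq> {} \<and> openin T (?V i) \<and> ?V i \<noteq> {}" if "i < 2" for i
    using assms(2-) by simp
  then obtain n where "n \<ge> 1" and n: "\<And>i. i < 2 \<Longrightarrow> g n ` ?U i \<inter> ?V i \<noteq> {}"
    using weakly_mixing_orderE[where U = ?U and V = ?V, OF wm2] by blast
  have "n \<in> hitting_times g U1 V1" using n[of 0] by (simp add: hitting_times_def)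
  moreover have "n \<in> hitting_times g U2 V2" using n[of 1] by (simp add: hitting_times_def)
  ultimately show thesis by (rule that[OF \<open>n \<ge> 1\<close>])
qed

lemma continuous_on_omega:
  assumes "\<And>n. n \<ge> 1 \<Longrightarrow> continuous_on UNIV (f n)"
  shows "continuous_on UNIV (omega f m)"
proof (induction m)
  case (Suc m)
  with assms[of "Suc m"] show ?case
    by (auto intro: continuous_on_compose2)
qed (simp add: continuous_on_id)

lemma commutative_system_f_omega:
  assumes "commutative_system f" "k \<ge> 1"
  shows "f k (omega f m x) = omega f m (f k x)"
proof (induction m arbitrary: x)
  case (Suc m)
  have "f k \<circ> f (Suc m) = f (Suc m) \<circ> f k"
    using assms unfolding commutative_system_def by simp
  with Suc show ?case by (metis comp_apply omega.simps(2))
qed simp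

lemma commutative_system_omega:
  assumes "commutative_system f"
  shows "omega f n (omega f m x) = omega f m (omega f n x)"
  by (induction n arbitrary: x) (simp_all add: commutative_system_f_omega[OF assms])

text \<open>Furstenberg's intersection lemma: for a common hitting time m of (U1, U2) and (V1, V2), the
  pair (U1 \<inter> \<omega>(m)\<inverse>(U2), V1 \<inter> \<omega>(m)\<inverse>(V2)) works because \<omega>(n) and \<omega>(m) commute.\<close>
lemma hitting_times_Int_commutative:
  fixes f :: "nat \<Rightarrow> 'a::topological_space \<Rightarrow> 'a"
  assumes wm: "weakly_mixing euclidean (omega f)" and comm: "commutative_system f"
    and cont: "\<And>n. n \<ge> 1 \<Longrightarrow> continuous_on UNIV (f n)"
    and "open U1" "U1 \<noteq> {}" "open V1" "V1 \<noteq> {}" "open U2" "U2 \<noteq> {}" "open V2" "V2 \<noteq> {}"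
  obtains U V where "open U" "U \<noteq> {}" "open V" "V \<noteq> {}"
    "hitting_times (omega f) U V \<subseteq> hitting_times (omega f) U1 V1 \<inter> hitting_times (omega f) U2 V2"
proof -
  have "openin euclidean U1" "openin euclidean V1" "openin euclidean U2" "openin euclidean V2"
    using assms(4-) by (simp_all add: open_openin[symmetric])
  then obtain m where "m \<in> hitting_times (omega f) U1 U2" "m \<in> hitting_times (omega f) V1 V2"
    using weakly_mixingE[OF wm _ \<open>U1 \<noteq> {}\<close> _ \<open>U2 \<noteq> {}\<close> _ \<open>V1 \<noteq> {}\<close> _ \<open>V2 \<noteq> {}\<close>]
    by blast
  define U where "U = U1 \<inter> omega f m -` U2"
  define V where "V = V1 \<inter> omega f m -` V2"
  have "continuous_on UNIV (omega f m)" using cont by (rule continuous_on_omega)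
  then have "open U" "open V"
    unfolding U_def V_def using assms(4-)
    by (auto intro!: open_Int continuous_imp_open_vimage[of UNIV])
  moreover have "U \<noteq> {}" "V \<noteq> {}"
    using \<open>m \<in> hitting_times (omega f) U1 U2\<close> \<open>m \<in> hitting_times (omega f) V1 V2\<close>
    unfolding U_def V_def hitting_times_def by auto
  moreover have "n \<in> hitting_times (omega f) U1 V1 \<inter> hitting_times (omega f) U2 V2"
    if hit: "n \<in> hitting_times (omega f) U V" for n
  proof -
    obtain x where "x \<in> U" "omega f n x \<in> V"
      using hit unfolding hitting_times_def by blast
    then have "x \<in> U1" "omega f n x \<in> V1" "omega f m x \<in> U2" "omega f n (omega f m x) \<in> V2"
      unfolding U_def V_def by (auto simp: commutative_system_omega[OF comm, of n m])
    then show ?thesis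
      unfolding hitting_times_def by blast
  qed
  ultimately show thesis by (intro that[of U V]) auto
qed

lemma hitting_times_INT_commutative:
  fixes f :: "nat \<Rightarrow> 'a::topological_space \<Rightarrow> 'a" and k :: nat
  assumes wm: "weakly_mixing euclidean (omega f)" and comm: "commutative_system f"
    and cont: "\<And>n. n \<ge> 1 \<Longrightarrow> continuous_on UNIV (f n)"
    and "\<And>i. i < k \<Longrightarrow> open (U i) \<and> U i \<noteq> {} \<and> open (V i) \<and> V i \<noteq> {}"
  shows "\<exists>U' V'. open U' \<and> U' \<noteq> {} \<and> open V' \<and> V' \<noteq> {} \<and>
    hitting_times (omega f) U' V' \<subseteq> (\<Inter>i<k. hitting_times (omega f) (U i) (V i))"
  using assms(4)
proof (induction k)
  case 0
  show ?case by (intro exI[of _ UNIV]) auto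
next
  case (Suc k)
  have "\<exists>U' V'. open U' \<and> U' \<noteq> {} \<and> open V' \<and> V' \<noteq> {} \<and>
    hitting_times (omega f) U' V' \<subseteq> (\<Inter>i<k. hitting_times (omega f) (U i) (V i))"
    by (rule Suc.IH) (simp add: Suc.prems)
  then obtain U' V' where U': "open U'" "U' \<noteq> {}" "open V'" "V' \<noteq> {}"
    and U'V': "hitting_times (omega f) U' V' \<subseteq> (\<Inter>i<k. hitting_times (omega f) (U i) (V i))"
    by blast
  have "open (U k)" "U k \<noteq> {}" "open (V k)" "V k \<noteq> {}"
    using Suc.prems by auto
  then obtain U'' V'' where "open U''" "U'' \<noteq> {}" "open V''" "V'' \<noteq> {}"
    and "hitting_times (omega f) U'' V''
      \<subseteq> hitting_times (omega f) U' V' \<inter> hitting_times (omega f) (U k) (V k)"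
    using hitting_times_Int_commutative[OF wm comm cont U'] by blast
  moreover have "(\<Inter>i<Suc k. hitting_times (omega f) (U i) (V i))
      = hitting_times (omega f) (U k) (V k) \<inter> (\<Inter>i<k. hitting_times (omega f) (U i) (V i))"
    by (simp add: lessThan_Suc)
  ultimately have "hitting_times (omega f) U'' V'' \<subseteq> (\<Inter>i<Suc k. hitting_times (omega f) (U i) (V i))"
    using U'V' by blast
  with \<open>open U''\<close> \<open>U'' \<noteq> {}\<close> \<open>open V''\<close> \<open>V'' \<noteq> {}\<close> show ?case
    by blast
qed

theorem weakly_mixing_all_orders_if_commutative:
  fixes f :: "nat \<Rightarrow> 'a::topological_space \<Rightarrow> 'a"
  assumes wm: "weakly_mixing euclidean (omega f)" and comm: "commutative_system f"
    and cont: "\<And>n. n \<ge> 1 \<Longrightarrow> continuous_on UNIV (f n)"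
  shows "weakly_mixing_all_orders euclidean (omega f)"
  unfolding weakly_mixing_all_orders_def weakly_mixing_order_def
proof (intro allI impI)
  fix k and U V :: "nat \<Rightarrow> 'a set"
  assume "\<forall>i<k. openin euclidean (U i) \<and> U i \<noteq> {} \<and> openin euclidean (V i) \<and> V i \<noteq> {}"
  then have "open (U i) \<and> U i \<noteq> {} \<and> open (V i) \<and> V i \<noteq> {}" if "i < k" for i
    using that by simp
  from hitting_times_INT_commutative[OF wm comm cont this]
  obtain U' V' where "open U'" "U' \<noteq> {}" "open V'" "V' \<noteq> {}"
    and U'V': "hitting_times (omega f) U' V' \<subseteq> (\<Inter>i<k. hitting_times (omega f) (U i) (V i))"
    by meson
  then have U': "openin euclidean U'" "U' \<noteq> {}" "openin euclidean V'" "V' \<noteq> {}"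
    by (simp_all add: open_openin[symmetric])
  obtain n where "n \<ge> 1" "n \<in> hitting_times (omega f) U' V'"
    using weakly_mixingE[OF wm U' U'] by blast
  with U'V' have "n \<in> hitting_times (omega f) (U i) (V i)" if "i < k" for i
    using that by blast
  with \<open>n \<ge> 1\<close> show "\<exists>n\<ge>1. \<forall>i<k. omega f n ` U i \<inter> V i \<noteq> {}"
    unfolding hitting_times_def by blast
qed

theorem mainTheorem4:
  fixes f :: "nat \<Rightarrow> 'a::metric_space \<Rightarrow> 'a"
    and \<Psi> :: "'a set set"
    and \<Delta> :: "'a set topology"
  assumes compactX: "compact (UNIV :: 'a set)"
    and cont: "\<And>n. n \<ge> 1 \<Longrightarrow> continuous_on UNIV (f n)"
    and Psi_sub: "\<Psi> \<subseteq> nonempty_compacts"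
    and fin_sub: "nonempty_finites \<subseteq> \<Psi>"
    and invariant: "\<And>k A. A \<in> \<Psi> \<Longrightarrow> omega_bar f k A \<in> \<Psi>"
    and topspace: "topspace \<Delta> = \<Psi>"
    and adm: "admissible \<Delta>"
    and hm_type: "hit_and_miss_type \<Psi> \<Delta> \<or> hit_and_far_miss_type \<Psi> \<Delta>"
    and induced_cont: "\<And>k. continuous_map \<Delta> \<Delta> (omega_bar f k)"
  shows "(weakly_mixing_all_orders euclidean (omega f) \<longrightarrow> weakly_mixing \<Delta> (omega_bar f))
    \<and> ((commutative_system f \<and>
         (\<exists>\<beta>. topological_basis \<beta> \<and> (\<forall>U\<in>\<beta>. openin \<Delta> (miss \<Psi> U))))
        \<longrightarrow> (weakly_mixing \<Delta> (omega_bar f) \<longrightarrow> weakly_mixing_all_orders euclidean (omega f)))"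
proof (intro conjI impI)
  assume "weakly_mixing_all_orders euclidean (omega f)"
  then show "weakly_mixing \<Delta> (omega_bar f)"
    by (rule weakly_mixing_hyperspace[OF fin_sub Psi_sub hm_type topspace])
next
  assume "commutative_system f \<and> (\<exists>\<beta>. topological_basis \<beta> \<and> (\<forall>U\<in>\<beta>. openin \<Delta> (miss \<Psi> U)))"
    and wm: "weakly_mixing \<Delta> (omega_bar f)"
  then obtain \<beta> where comm: "commutative_system f"
    and basis: "topological_basis \<beta>" "\<And>U. U \<in> \<beta> \<Longrightarrow> openin \<Delta> (miss \<Psi> U)"
    by blast
  have "weakly_mixing euclidean (omega f)"
    using weakly_mixing_if_weakly_mixing_hyperspace[OF fin_sub Psi_sub hm_type basis wm] .
  then show "weakly_mixing_all_orders euclidean (omega f)"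
    using comm cont by (rule weakly_mixing_all_orders_if_commutative)
qed

end
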